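(* Assume the setup in the context, with the fine-tuning regime, and let $0<\epsilon\le 1$ be such that $|\langle\tau_i,\tau_j\rangle|\le\epsilon\|\tau_i\|\|\tau_j\|$ for all $i\neq j$. Let $\mathbf{T}=[\tau_1,\dots,\tau_T]\in\mathbb{R}^{d\times T}$, let $\mathbf{W}_e\in\mathbb{R}^{T\times M}$ and $\mathbf{W}_d\in\mathbb{R}^{M\times T}$ be arbitrary, and let $\hat{\mathbf{T}}=\mathbf{T}\mathbf{W}_e\mathbf{W}_d$ with $i$-th column $\hat\tau_i$ and column error $e_i=\hat\tau_i-\tau_i$. Fix $i\in[T]$ and $\alpha_i\in[0,1]$, let $\theta_{\mathrm{Neg},i}=\theta_0-\alpha_i\hat\tau_i$, and assume local smoothness holds with radius $r\ge 2\sqrt{C}+\|e_i\|$. Then for every $j\in[T]$ with $j\neq i$, $$\mathcal{L}_j(\theta_{\mathrm{Neg},i})-\mathcal{L}_j(\theta_0)\le L_jC\Big(\frac{5}{2}+2\epsilon\Big)+L_j\|e_i\|^2.$$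
   Context: Setup: $\theta_0\in\mathbb{R}^d$ is a pretrained parameter vector; $\theta_1,\dots,\theta_T\in\mathbb{R}^d$ are fine-tuned parameters and $\tau_i:=\theta_i-\theta_0$ are task vectors. For each task $i$, $\mathcal{L}_i:\mathbb{R}^d\to\mathbb{R}$ is a differentiable loss (population risk). Norms are Euclidean. Fine-tuning regime: $\nabla\mathcal{L}_i(\theta_i)=0$ for all $i\in[T]$, and there is $C>0$ with $\|\tau_i\|^2\le C$ for all $i$. Local smoothness with radius $r>0$: for each $i$ there is $L_i\ge 0$ such that for all $\theta$ with $\|\theta-\theta_i\|\le r$, $\big|\mathcal{L}_i(\theta)-\mathcal{L}_i(\theta_i)-\langle\theta-\theta_i,\nabla\mathcal{L}_i(\theta_i)\rangle\big|\le\frac{L_i}{2}\|\theta-\theta_i\|^2$. $\hat{\mathbf{T}}$ is the task-vector matrix reconstructed from the basis $\mathbf{B}=\mathbf{T}\mathbf{W}_e$ via the decoder $\mathbf{W}_d$. *)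

theory Defs
  imports "HOL-Analysis.Analysis"
begin

definition task_matrix :: "('t::finite \<Rightarrow> real^'d) \<Rightarrow> real^'t^'d" where
  "task_matrix tau = (\<chi> r c. tau c $ r)"

end

theory Submission
  imports Defs
begin

text \<open>
  Since \<open>\<theta>\<^sub>j\<close> is stationary, local smoothness bounds \<open>|\<L>\<^sub>j(x) - \<L>\<^sub>j(\<theta>\<^sub>j)|\<close> by
  \<open>L\<^sub>j/2 \<parallel>x - \<theta>\<^sub>j\<parallel>\<^sup>2\<close>; comparing both \<open>\<theta>\<^sub>N\<^sub>e\<^sub>g\<^sub>,\<^sub>i\<close> and \<open>\<theta>\<^sub>0\<close> with \<open>\<theta>\<^sub>j\<close> bounds the loss
  change by \<open>L\<^sub>j/2 (\<parallel>\<theta>\<^sub>N\<^sub>e\<^sub>g\<^sub>,\<^sub>i - \<theta>\<^sub>j\<parallel>\<^sup>2 + \<parallel>\<tau>\<^sub>j\<parallel>\<^sup>2)\<close>. Here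
  \<open>\<theta>\<^sub>N\<^sub>e\<^sub>g\<^sub>,\<^sub>i - \<theta>\<^sub>j = -(\<tau>\<^sub>j + \<alpha>\<tau>\<^sub>i) - \<alpha>e\<^sub>i\<close>, and incoherence of the task vectors gives
  \<open>\<parallel>\<tau>\<^sub>j + \<alpha>\<tau>\<^sub>i\<parallel>\<^sup>2 \<le> C(2 + 2\<epsilon>)\<close>; the radius condition makes all points lie in the
  smoothness ball.
\<close>

lemma power2_norm_add_le:
  fixes a b :: "'a::real_normed_vector"
  shows "(norm (a + b))\<^sup>2 \<le> 2 * (norm a)\<^sup>2 + 2 * (norm b)\<^sup>2"
proof -
  have "(norm (a + b))\<^sup>2 \<le> (norm a + norm b)\<^sup>2"
    by (simp add: norm_triangle_ineq power_mono)
  also have "\<dots> \<le> 2 * (norm a)\<^sup>2 + 2 * (norm b)\<^sup>2"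
    by (smt (verit) power2_sum zero_le_power2 power2_diff)
  finally show ?thesis .
qed

lemma power2_norm_add_scaleR_le_incoherent:
  fixes a b :: "'a::real_inner"
  assumes a: "(norm a)\<^sup>2 \<le> C" and b: "(norm b)\<^sup>2 \<le> C"
    and incoh: "\<bar>a \<bullet> b\<bar> \<le> eps * norm a * norm b"
    and eps: "0 \<le> eps" and alpha: "0 \<le> alpha" "alpha \<le> 1"
  shows "(norm (a + alpha *\<^sub>R b))\<^sup>2 \<le> C * (2 + 2 * eps)"
proof -
  have expand: "(norm (a + alpha *\<^sub>R b))\<^sup>2
      = (norm a)\<^sup>2 + alpha\<^sup>2 * (norm b)\<^sup>2 + 2 * alpha * (a \<bullet> b)"
    unfolding power2_norm_eq_inner by (simp add: algebra_simps inner_commute power2_eq_square)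
  have "alpha\<^sup>2 * (norm b)\<^sup>2 \<le> C"
    using b alpha by (smt (verit) mult_left_le_one_le power_le_one zero_le_power2)
  moreover have "norm a * norm b \<le> sqrt C * sqrt C"
    using a b order_trans[OF zero_le_power2 a] by (intro mult_mono) (simp_all add: real_le_rsqrt)
  then have "norm a * norm b \<le> C"
    using order_trans[OF zero_le_power2 a] by simp
  then have "\<bar>a \<bullet> b\<bar> \<le> eps * C"
    using incoh eps by (smt (verit) mult.assoc mult_left_mono)
  then have "alpha * (a \<bullet> b) \<le> eps * C"
    using mult_left_mono[OF abs_ge_self alpha(1)] mult_left_le_one_le[OF abs_ge_zero alpha]
    by (meson order_trans)
  ultimately show ?thesis
    using expand a by (simp add: algebra_simps)
qed

lemma norm_add_scaleR_add_scaleR_le: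
  fixes a b c :: "'a::real_normed_vector"
  assumes a: "(norm a)\<^sup>2 \<le> C" and b: "(norm b)\<^sup>2 \<le> C" and alpha: "0 \<le> alpha" "alpha \<le> 1"
  shows "norm (a + alpha *\<^sub>R b + alpha *\<^sub>R c) \<le> 2 * sqrt C + norm c"
proof -
  have "norm (a + alpha *\<^sub>R b + alpha *\<^sub>R c) \<le> norm a + norm (alpha *\<^sub>R b) + norm (alpha *\<^sub>R c)"
    by (meson norm_triangle_le norm_triangle_ineq add_mono order_refl)
  moreover have "norm a \<le> sqrt C" "norm b \<le> sqrt C"
    using a b by (simp_all add: real_le_rsqrt)
  moreover have "norm (alpha *\<^sub>R b) \<le> norm b" "norm (alpha *\<^sub>R c) \<le> norm c"
    using alpha by (simp_all add: mult_left_le_one_le)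
  ultimately show ?thesis
    by linarith
qed

lemma power2_norm_add_scaleR_add_scaleR_le_incoherent:
  fixes a b c :: "'a::real_inner"
  assumes a: "(norm a)\<^sup>2 \<le> C" and b: "(norm b)\<^sup>2 \<le> C"
    and incoh: "\<bar>a \<bullet> b\<bar> \<le> eps * norm a * norm b"
    and eps: "0 \<le> eps" and alpha: "0 \<le> alpha" "alpha \<le> 1"
  shows "(norm (a + alpha *\<^sub>R b + alpha *\<^sub>R c))\<^sup>2 \<le> 2 * C * (2 + 2 * eps) + 2 * (norm c)\<^sup>2"
proof -
  have "norm (alpha *\<^sub>R c) \<le> norm c"
    using alpha by (simp add: mult_left_le_one_le)
  then have "(norm (alpha *\<^sub>R c))\<^sup>2 \<le> (norm c)\<^sup>2"
    by (simp add: power_mono)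
  then show ?thesis
    using power2_norm_add_le[of "a + alpha *\<^sub>R b" "alpha *\<^sub>R c"]
      power2_norm_add_scaleR_le_incoherent[OF a b incoh eps alpha]
    by linarith
qed

lemma diff_le_of_quadratic_bound:
  fixes f :: "'a::real_normed_vector \<Rightarrow> real"
  assumes bound: "\<And>x. norm (x - x0) \<le> r \<Longrightarrow> \<bar>f x - f x0\<bar> \<le> L / 2 * (norm (x - x0))\<^sup>2"
    and "norm (x - x0) \<le> r" "norm (y - x0) \<le> r"
  shows "f x - f y \<le> L / 2 * ((norm (x - x0))\<^sup>2 + (norm (y - x0))\<^sup>2)"
  using bound[OF assms(2)] bound[OF assms(3)] unfolding distrib_left abs_le_iff by linarith

theorem mainTheorem8:
  fixes theta0 :: "real^'d::finite"
    and theta :: "'t::finite \<Rightarrow> real^'d"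
    and Loss :: "'t \<Rightarrow> real^'d \<Rightarrow> real"
    and grad :: "'t \<Rightarrow> real^'d \<Rightarrow> real^'d"
    and Lc :: "'t \<Rightarrow> real"
    and C r eps :: real
    and We :: "real^'m::finite^'t"
    and Wd :: "real^'t^'m"
    and i :: 't and alpha :: real
  defines "tau \<equiv> (\<lambda>k. theta k - theta0)"
  defines "That \<equiv> task_matrix tau ** We ** Wd"
  defines "tauhat \<equiv> (\<lambda>k. column k That)"
  defines "e \<equiv> (\<lambda>k. tauhat k - tau k)"
  assumes grad: "\<And>k x. (Loss k has_derivative (\<lambda>h. grad k x \<bullet> h)) (at x)"
    and stationary: "\<And>k. grad k (theta k) = 0"
    and C_pos: "C > 0"
    and tau_bound: "\<And>k. (norm (tau k))\<^sup>2 \<le> C"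
    and r_pos: "r > 0"
    and Lc_nonneg: "\<And>k. Lc k \<ge> 0"
    and smooth: "\<And>k x. norm (x - theta k) \<le> r \<Longrightarrow>
        \<bar>Loss k x - Loss k (theta k) - (x - theta k) \<bullet> grad k (theta k)\<bar>
          \<le> Lc k / 2 * (norm (x - theta k))\<^sup>2"
    and eps: "0 < eps" "eps \<le> 1"
    and incoh: "\<And>k l. k \<noteq> l \<Longrightarrow> \<bar>tau k \<bullet> tau l\<bar> \<le> eps * norm (tau k) * norm (tau l)"
    and alpha: "0 \<le> alpha" "alpha \<le> 1"
    and r_big: "r \<ge> 2 * sqrt C + norm (e i)"
  shows "\<forall>j. j \<noteq> i \<longrightarrow>
      Loss j (theta0 - alpha *\<^sub>R tauhat i) - Loss j theta0
        \<le> Lc j * C * (5/2 + 2 * eps) + Lc j * (norm (e i))\<^sup>2"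
proof (intro allI impI)
  fix j assume "j \<noteq> i"
  let ?x = "theta0 - alpha *\<^sub>R tauhat i"
  have x_offset: "norm (?x - theta j) = norm (tau j + alpha *\<^sub>R tau i + alpha *\<^sub>R e i)"
    by (simp add: tau_def e_def norm_minus_commute algebra_simps)
  have theta0_offset: "norm (theta0 - theta j) = norm (tau j)"
    by (simp add: tau_def norm_minus_commute)
  have x_near: "norm (?x - theta j) \<le> r"
    using norm_add_scaleR_add_scaleR_le[OF tau_bound tau_bound alpha, of j i "e i"] x_offset r_big
    by linarith
  have theta0_near: "norm (theta0 - theta j) \<le> r"
    using real_le_rsqrt[OF tau_bound[of j]] real_sqrt_ge_zero[of C] C_pos norm_ge_zero[of "e i"]
      theta0_offset r_big by linarith
  have sum_bound: "(norm (?x - theta j))\<^sup>2 + (norm (theta0 - theta j))\<^sup>2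
      \<le> 2 * (C * (5/2 + 2 * eps) + (norm (e i))\<^sup>2)"
    using power2_norm_add_scaleR_add_scaleR_le_incoherent[OF tau_bound tau_bound
        incoh[OF \<open>j \<noteq> i\<close>] _ alpha, of "e i"] eps tau_bound[of j] x_offset theta0_offset
    by (simp add: algebra_simps)
  have "Loss j ?x - Loss j theta0
      \<le> Lc j / 2 * ((norm (?x - theta j))\<^sup>2 + (norm (theta0 - theta j))\<^sup>2)"
    using diff_le_of_quadratic_bound[OF _ x_near theta0_near] smooth stationary by simp
  also have "\<dots> \<le> Lc j / 2 * (2 * (C * (5/2 + 2 * eps) + (norm (e i))\<^sup>2))"
    using sum_bound Lc_nonneg[of j] by (intro mult_left_mono) simp_all
  finally show "Loss j ?x - Loss j theta0 \<le> Lc j * C * (5/2 + 2 * eps) + Lc j * (norm (e i))\<^sup>2"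
    by (simp add: algebra_simps)
qed

end
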